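(* Let $(h_n)_{n\ge1}$ be the Hermite functions, i.e. the $L^2(\mathbb{R})$-normalized eigenfunctions of $T=-\frac{d^2}{dx^2}+x^2$ with $Th_n=(2n-1)h_n$, $\|h_n\|_{L^2(\mathbb{R})}=1$. Let $\delta_1>0$. Then there is a constant $C_{\delta_1}$ depending only on $\delta_1$ such that for every $n\ge1$, $$\left(\int_{\mathbb{R}}\frac{h_n^2(x)}{(1+\ln(1+x^2))^{2\delta_1}}\,dx\right)^{1/2}\le\frac{C_{\delta_1}}{(1+\ln n)^{\delta_1}}.$$ *)

theory Defs
  imports "HOL-Analysis.Analysis"
begin

fun hermite_poly :: "nat \<Rightarrow> real \<Rightarrow> real" where
  "hermite_poly 0 x = 1"
| "hermite_poly (Suc 0) x = 2 * x"
| "hermite_poly (Suc (Suc k)) x =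
     2 * x * hermite_poly (Suc k) x - 2 * real (Suc k) * hermite_poly k x"

text \<open>Hermite functions indexed from 1 as in the paper:
  h_n(x) = H_{n-1}(x) exp(-x^2/2) / sqrt(2^(n-1) (n-1)! sqrt pi),
  the L^2-normalized eigenfunction of -d^2/dx^2 + x^2 with eigenvalue 2n-1.\<close>
definition hermite_fun :: "nat \<Rightarrow> real \<Rightarrow> real" where
  "hermite_fun n x =
     hermite_poly (n - 1) x * exp (- (x ^ 2) / 2)
       / sqrt (2 ^ (n - 1) * fact (n - 1) * sqrt pi)"

end

theory Submission
  imports Defs "HOL-Probability.Distributions" "HOL-Real_Asymp.Real_Asymp"
begin

text \<open>The Hermite function \<open>y = h\<^sub>n\<close> solves \<open>y'' + (2n - 1 - x\<^sup>2) y = 0\<close>, so the energy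
  \<open>y'\<^sup>2 + (2n - 1 - x\<^sup>2) y\<^sup>2\<close> decreases away from the origin. At the origin it is bounded by
  the mean of \<open>2 \<bar>x\<bar>\<close> against \<open>y\<^sup>2\<close>, hence by AM-GM and the second moment of \<open>y\<^sup>2\<close> by
  \<open>2 sqrt (2n - 1)\<close>. This gives \<open>h\<^sub>n\<^sup>2 \<le> 4 / sqrt n\<close> for \<open>x\<^sup>2 \<le> n / 2\<close>. Splitting the weighted
  integral at \<open>\<bar>x\<bar> = (n / 2) powr (1/4)\<close>, the inner part is \<open>O(n powr (-1/4))\<close>, which beats
  every power of \<open>1 + ln n\<close>, while on the outer part the weight is at least
  \<open>((1 + ln n) / 2) powr (2 \<delta>)\<close> and \<open>h\<^sub>n\<close> has total mass one.\<close>

lemma hermite_poly_Suc: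
  "hermite_poly (Suc k) x = 2 * x * hermite_poly k x - 2 * real k * hermite_poly (k - 1) x"
  by (cases k) auto

lemma hermite_poly_has_real_derivative:
  "(hermite_poly k has_real_derivative 2 * real k * hermite_poly (k - 1) x) (at x)"
proof (induction k x rule: hermite_poly.induct)
  case (1 x)
  have "hermite_poly 0 = (\<lambda>_. 1)" by (rule ext) simp
  then show ?case by simp
next
  case (2 x)
  have "hermite_poly (Suc 0) = (\<lambda>x. 2 * x)" by (rule ext) simp
  then show ?case by (auto intro!: derivative_eq_intros)
next
  case (3 k x)
  have "hermite_poly (Suc (Suc k)) =
      (\<lambda>x. 2 * x * hermite_poly (Suc k) x - 2 * real (Suc k) * hermite_poly k x)"
    by (rule ext) simp
  then have "(hermite_poly (Suc (Suc k)) has_real_derivative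
      2 * hermite_poly (Suc k) x + 2 * x * (2 * real (Suc k) * hermite_poly k x)
        - 2 * real (Suc k) * (2 * real k * hermite_poly (k - 1) x)) (at x)"
    using 3 by (auto intro!: derivative_eq_intros)
  then show ?case
    by (rule DERIV_cong) (simp add: hermite_poly_Suc[of k] algebra_simps)
qed

lemma hermite_poly_has_real_derivative_chain [derivative_intros]:
  "(g has_real_derivative g') (at x within S) \<Longrightarrow>
   ((\<lambda>x. hermite_poly k (g x)) has_real_derivative 2 * real k * hermite_poly (k - 1) (g x) * g')
     (at x within S)"
  using DERIV_chain2[OF hermite_poly_has_real_derivative] by blast

text \<open>The three-term recurrence at index \<open>k - 1\<close>; the factor \<open>k\<close> makes it hold for \<open>k = 0\<close> too.\<close>
lemma hermite_poly_rec_pred: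
  "real k * (hermite_poly k x - 2 * x * hermite_poly (k - 1) x
     + 2 * real (k - 1) * hermite_poly (k - 2) x) = 0"
  by (cases k) (auto simp: hermite_poly_Suc)

section \<open>Continuous functions of polynomial growth against the Gaussian\<close>

definition continuous_poly_growth :: "(real \<Rightarrow> real) \<Rightarrow> bool" where
  "continuous_poly_growth f \<longleftrightarrow>
     continuous_on UNIV f \<and> (\<exists>c m. \<forall>x. \<bar>f x\<bar> \<le> c * (1 + \<bar>x\<bar>) ^ m)"

lemma continuous_poly_growthE:
  assumes "continuous_poly_growth f"
  obtains c m where "0 \<le> c" "\<And>x. \<bar>f x\<bar> \<le> c * (1 + \<bar>x\<bar>) ^ m"
proof -
  obtain c m where "\<And>x. \<bar>f x\<bar> \<le> c * (1 + \<bar>x\<bar>) ^ m"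
    using assms unfolding continuous_poly_growth_def by blast
  moreover from this[of 0] have "0 \<le> c" by simp
  ultimately show thesis using that by blast
qed

lemma continuous_poly_growth_const: "continuous_poly_growth (\<lambda>x. a)"
  unfolding continuous_poly_growth_def by (auto intro!: exI[of _ "\<bar>a\<bar>"] exI[of _ "0::nat"])

lemma continuous_poly_growth_ident: "continuous_poly_growth (\<lambda>x. x)"
  unfolding continuous_poly_growth_def by (auto intro!: exI[of _ 1] exI[of _ "1::nat"])

lemma continuous_poly_growth_abs:
  "continuous_poly_growth f \<Longrightarrow> continuous_poly_growth (\<lambda>x. \<bar>f x\<bar>)"
  unfolding continuous_poly_growth_def by (auto intro: continuous_intros)

lemma continuous_poly_growth_mult:
  assumes "continuous_poly_growth f" "continuous_poly_growth g"
  shows "continuous_poly_growth (\<lambda>x. f x * g x)"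
proof -
  obtain c m where c: "0 \<le> c" "\<And>x. \<bar>f x\<bar> \<le> c * (1 + \<bar>x\<bar>) ^ m"
    using continuous_poly_growthE[OF assms(1)] by blast
  obtain d n where d: "\<And>x. \<bar>g x\<bar> \<le> d * (1 + \<bar>x\<bar>) ^ n"
    using continuous_poly_growthE[OF assms(2)] by blast
  have "\<bar>f x * g x\<bar> \<le> (c * d) * (1 + \<bar>x\<bar>) ^ (m + n)" for x
  proof -
    have "\<bar>f x * g x\<bar> \<le> (c * (1 + \<bar>x\<bar>) ^ m) * (d * (1 + \<bar>x\<bar>) ^ n)"
      unfolding abs_mult using c by (intro mult_mono d) auto
    then show ?thesis by (simp add: power_add algebra_simps)
  qed
  with assms show ?thesis
    unfolding continuous_poly_growth_def by (blast intro: continuous_intros)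
qed

lemma continuous_poly_growth_add:
  assumes "continuous_poly_growth f" "continuous_poly_growth g"
  shows "continuous_poly_growth (\<lambda>x. f x + g x)"
proof -
  obtain c m where c: "0 \<le> c" "\<And>x. \<bar>f x\<bar> \<le> c * (1 + \<bar>x\<bar>) ^ m"
    using continuous_poly_growthE[OF assms(1)] by blast
  obtain d n where d: "0 \<le> d" "\<And>x. \<bar>g x\<bar> \<le> d * (1 + \<bar>x\<bar>) ^ n"
    using continuous_poly_growthE[OF assms(2)] by blast
  have "\<bar>f x + g x\<bar> \<le> (c + d) * (1 + \<bar>x\<bar>) ^ (m + n)" for x
  proof -
    have "(1 + \<bar>x\<bar>) ^ m \<le> (1 + \<bar>x\<bar>) ^ (m + n)" "(1 + \<bar>x\<bar>) ^ n \<le> (1 + \<bar>x\<bar>) ^ (m + n)"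
      by (intro power_increasing; simp)+
    then have "c * (1 + \<bar>x\<bar>) ^ m \<le> c * (1 + \<bar>x\<bar>) ^ (m + n)"
        "d * (1 + \<bar>x\<bar>) ^ n \<le> d * (1 + \<bar>x\<bar>) ^ (m + n)"
      using c d by (auto intro: mult_left_mono)
    then show ?thesis
      using abs_triangle_ineq[of "f x" "g x"] c(2)[of x] d(2)[of x] by (simp add: algebra_simps)
  qed
  with assms show ?thesis
    unfolding continuous_poly_growth_def by (blast intro: continuous_intros)
qed

lemma continuous_poly_growth_diff:
  assumes "continuous_poly_growth f" "continuous_poly_growth g"
  shows "continuous_poly_growth (\<lambda>x. f x - g x)"
  using continuous_poly_growth_add[OF assms(1)
      continuous_poly_growth_mult[OF continuous_poly_growth_const[of "-1"] assms(2)]]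
  by simp

lemma continuous_poly_growth_power:
  "continuous_poly_growth f \<Longrightarrow> continuous_poly_growth (\<lambda>x. f x ^ n)"
  by (induction n) (auto intro: continuous_poly_growth_mult continuous_poly_growth_const)

lemma continuous_poly_growth_hermite_poly: "continuous_poly_growth (hermite_poly k)"
proof (induction k rule: induct_nat_012)
  case 0
  then show ?case using continuous_poly_growth_const[of 1] by (simp add: fun_eq_iff)
next
  case 1
  then show ?case
    using continuous_poly_growth_mult[OF continuous_poly_growth_const continuous_poly_growth_ident]
    by (simp add: fun_eq_iff)
next
  case (ge2 k)
  have "continuous_poly_growth
      (\<lambda>x. 2 * x * hermite_poly (Suc k) x - 2 * real (Suc k) * hermite_poly k x)"
    by (intro continuous_poly_growth_diff continuous_poly_growth_mult
        continuous_poly_growth_const continuous_poly_growth_ident ge2[unfolded fun_eq_iff])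
  then show ?case by (simp add: fun_eq_iff)
qed

lemmas continuous_poly_growth_intros =
  continuous_poly_growth_const continuous_poly_growth_ident continuous_poly_growth_abs
  continuous_poly_growth_mult continuous_poly_growth_add continuous_poly_growth_diff
  continuous_poly_growth_power continuous_poly_growth_hermite_poly

lemma integrable_abs_power_gaussian: "integrable lborel (\<lambda>x::real. \<bar>x\<bar> ^ k * exp (- x\<^sup>2))"
proof -
  have "integrable lborel (\<lambda>x. sqrt pi * (normal_density 0 (sqrt (1/2)) x * \<bar>x - 0\<bar> ^ k))"
    by (intro integrable_mult_right integrable_normal_moment_abs) simp
  then show ?thesis
    by (simp add: normal_density_def power2_eq_square mult_ac)
qed

lemma integrable_poly_growth_gaussian:
  assumes "continuous_poly_growth f"
  shows "integrable lborel (\<lambda>x. f x * exp (- x\<^sup>2))"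
proof -
  obtain c m where c: "0 \<le> c" "\<And>x. \<bar>f x\<bar> \<le> c * (1 + \<bar>x\<bar>) ^ m"
    using continuous_poly_growthE[OF assms] by blast
  have "(1 + \<bar>x\<bar>) ^ m * exp (- x\<^sup>2) = (\<Sum>k\<le>m. (m choose k) * (\<bar>x\<bar> ^ k * exp (- x\<^sup>2)))" for x
    using binomial_ring[of "\<bar>x\<bar>" 1 m] by (simp add: add.commute sum_distrib_right mult.assoc)
  then have "integrable lborel (\<lambda>x. c * ((1 + \<bar>x\<bar>) ^ m * exp (- x\<^sup>2)))"
    using integrable_abs_power_gaussian by simp
  then show ?thesis
  proof (rule Bochner_Integration.integrable_bound)
    show "(\<lambda>x. f x * exp (- x\<^sup>2)) \<in> borel_measurable lborel"
    proof -
      have "f \<in> borel_measurable borel"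
        using assms borel_measurable_continuous_onI unfolding continuous_poly_growth_def by blast
      then show ?thesis by measurable
    qed
    show "AE x in lborel. norm (f x * exp (- x\<^sup>2)) \<le> norm (c * ((1 + \<bar>x\<bar>) ^ m * exp (- x\<^sup>2)))"
      using c by (auto simp: abs_mult intro!: mult_right_mono)
  qed
qed

lemma tendsto_poly_growth_gaussian:
  assumes "continuous_poly_growth f"
  shows "((\<lambda>x. f x * exp (- x\<^sup>2)) \<longlongrightarrow> 0) at_top" "((\<lambda>x. f x * exp (- x\<^sup>2)) \<longlongrightarrow> 0) at_bot"
proof -
  obtain c m where c: "0 \<le> c" "\<And>x. \<bar>f x\<bar> \<le> c * (1 + \<bar>x\<bar>) ^ m"
    using continuous_poly_growthE[OF assms] by blast
  have bound: "\<forall>\<^sub>F x in F. norm (f x * exp (- x\<^sup>2)) \<le> c * (1 + \<bar>x\<bar>) ^ m * exp (- x\<^sup>2)" for F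
    using c by (auto simp: abs_mult intro!: always_eventually mult_right_mono)
  have "((\<lambda>x. c * (1 + \<bar>x\<bar>) ^ m * exp (- x\<^sup>2)) \<longlongrightarrow> 0) at_top"
    "((\<lambda>x. c * (1 + \<bar>x\<bar>) ^ m * exp (- x\<^sup>2)) \<longlongrightarrow> 0) at_bot"
    by real_asymp+
  then show "((\<lambda>x. f x * exp (- x\<^sup>2)) \<longlongrightarrow> 0) at_top" "((\<lambda>x. f x * exp (- x\<^sup>2)) \<longlongrightarrow> 0) at_bot"
    by (auto intro: Lim_null_comparison[OF bound])
qed

lemma continuous_on_poly_growth_gaussian:
  "continuous_poly_growth f \<Longrightarrow> continuous_on UNIV (\<lambda>x. f x * exp (- x\<^sup>2))"
  unfolding continuous_poly_growth_def by (auto intro!: continuous_intros)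

section \<open>Vanishing boundary terms\<close>

lemma integral_lborel_eq_0_if_antiderivative_vanishes:
  fixes F f :: "real \<Rightarrow> real"
  assumes "\<And>x. (F has_real_derivative f x) (at x)" "continuous_on UNIV f" "integrable lborel f"
    "(F \<longlongrightarrow> 0) at_top" "(F \<longlongrightarrow> 0) at_bot"
  shows "integral\<^sup>L lborel f = 0"
proof -
  have "(LBINT x=-\<infinity>..\<infinity>. f x) = 0 - 0"
  proof (rule interval_integral_FTC_integrable)
    show "(F has_vector_derivative f x) (at x)" for x
      using assms(1) by (simp add: has_real_derivative_iff_has_vector_derivative)
    show "isCont f x" for x
      using assms(2) by (simp add: continuous_on_eq_continuous_at)
    show "set_integrable lborel (einterval (- \<infinity>) \<infinity>) f"
      using assms(3) by (simp add: set_integrable_def)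
    show "((F \<circ> real_of_ereal) \<longlongrightarrow> 0) (at_right (- \<infinity>))"
      using assms(5) by (simp add: ereal_tendsto_simps)
    show "((F \<circ> real_of_ereal) \<longlongrightarrow> 0) (at_left \<infinity>)"
      using assms(4) by (simp add: ereal_tendsto_simps)
  qed simp
  then show ?thesis
    by (simp add: interval_lebesgue_integral_def set_lebesgue_integral_def)
qed

lemma integral_Ioi_eq_if_antiderivative_vanishes:
  fixes F f :: "real \<Rightarrow> real"
  assumes "\<And>x. (F has_real_derivative f x) (at x)" "continuous_on UNIV f"
    "\<And>x. 0 < x \<Longrightarrow> 0 \<le> f x" "(F \<longlongrightarrow> 0) at_top"
  shows "integrable lborel (\<lambda>x. indicator {0<..} x * f x)"
    "integral\<^sup>L lborel (\<lambda>x. indicator {0<..} x * f x) = - F 0"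
proof -
  have "isCont F 0" using assms(1) DERIV_isCont by blast
  then have F0: "((F \<circ> real_of_ereal) \<longlongrightarrow> F 0) (at_right (ereal 0))"
    unfolding ereal_tendsto_simps by (simp add: filterlim_at_split isCont_def)
  have Finf: "((F \<circ> real_of_ereal) \<longlongrightarrow> 0) (at_left \<infinity>)"
    using assms(4) by (simp add: ereal_tendsto_simps)
  have "isCont f x" for x
    using assms(2) by (simp add: continuous_on_eq_continuous_at)
  moreover have "AE x in lborel. ereal 0 < ereal x \<longrightarrow> ereal x < \<infinity> \<longrightarrow> 0 \<le> f x"
    using assms(3) by auto
  ultimately have "set_integrable lborel {0<..} f" "(LBINT x=ereal 0..\<infinity>. f x) = - F 0"
    using interval_integral_FTC_nonneg[of "ereal 0" \<infinity> F f "F 0" 0, OF _ assms(1) _ _ F0 Finf]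
    by auto
  then show "integrable lborel (\<lambda>x. indicator {0<..} x * f x)"
    "integral\<^sup>L lborel (\<lambda>x. indicator {0<..} x * f x) = - F 0"
    by (simp_all add: set_integrable_def interval_lebesgue_integral_def set_lebesgue_integral_def)
qed

section \<open>The weighted norms of the Hermite polynomials\<close>

definition hermite_sqnorm :: "nat \<Rightarrow> real" where
  "hermite_sqnorm k = (LINT x|lborel. (hermite_poly k x)\<^sup>2 * exp (- x\<^sup>2))"

lemma integrable_hermite_poly_sq_gaussian:
  "integrable lborel (\<lambda>x. (hermite_poly k x)\<^sup>2 * exp (- x\<^sup>2))"
  by (intro integrable_poly_growth_gaussian continuous_poly_growth_intros)

lemma has_real_derivative_hermite_poly_product:
  "((\<lambda>x. hermite_poly (Suc k) x * hermite_poly k x * exp (- x\<^sup>2)) has_real_derivative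
     (2 * real (Suc k) * (hermite_poly k x)\<^sup>2 - (hermite_poly (Suc k) x)\<^sup>2) * exp (- x\<^sup>2)) (at x)"
proof -
  have "((\<lambda>x. hermite_poly (Suc k) x * hermite_poly k x * exp (- x\<^sup>2)) has_real_derivative
      2 * real (Suc k) * hermite_poly k x * hermite_poly k x * exp (- x\<^sup>2)
      + hermite_poly (Suc k) x * (2 * real k * hermite_poly (k - 1) x) * exp (- x\<^sup>2)
      - hermite_poly (Suc k) x * hermite_poly k x * (2 * x * exp (- x\<^sup>2))) (at x)"
    by (auto intro!: derivative_eq_intros simp: algebra_simps)
  then show ?thesis
    by (rule DERIV_cong) (simp add: hermite_poly_Suc[of k] power2_eq_square algebra_simps)
qed

lemma hermite_sqnorm_Suc: "hermite_sqnorm (Suc k) = 2 * real (Suc k) * hermite_sqnorm k"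
proof -
  let ?p = "\<lambda>x. 2 * real (Suc k) * (hermite_poly k x)\<^sup>2 - (hermite_poly (Suc k) x)\<^sup>2"
  have p: "continuous_poly_growth ?p"
    by (intro continuous_poly_growth_intros)
  have F: "continuous_poly_growth (\<lambda>x. hermite_poly (Suc k) x * hermite_poly k x)"
    by (intro continuous_poly_growth_intros)
  have "integral\<^sup>L lborel (\<lambda>x. ?p x * exp (- x\<^sup>2)) = 0"
    using has_real_derivative_hermite_poly_product continuous_on_poly_growth_gaussian[OF p]
      integrable_poly_growth_gaussian[OF p] tendsto_poly_growth_gaussian[OF F]
    by (intro integral_lborel_eq_0_if_antiderivative_vanishes) auto
  then show ?thesis
    using integrable_hermite_poly_sq_gaussian[of k] integrable_hermite_poly_sq_gaussian[of "Suc k"]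
    unfolding hermite_sqnorm_def by (simp add: left_diff_distrib mult.assoc)
qed

lemma hermite_sqnorm_eq: "hermite_sqnorm k = 2 ^ k * fact k * sqrt pi"
proof (induction k)
  case 0
  have "(LINT x|lborel. exp (- x\<^sup>2)) = (LINT x|lborel. sqrt pi * normal_density 0 (sqrt (1/2)) x)"
    by (simp add: normal_density_def power2_eq_square)
  then show ?case
    unfolding hermite_sqnorm_def by simp
next
  case (Suc k)
  then show ?case by (simp add: hermite_sqnorm_Suc algebra_simps)
qed

lemma hermite_sqnorm_pos: "0 < hermite_sqnorm k"
  by (simp add: hermite_sqnorm_eq)

lemma integral_sq_times_hermite_poly_sq_le:
  "(LINT x|lborel. x\<^sup>2 * (hermite_poly k x)\<^sup>2 * exp (- x\<^sup>2)) \<le> (2 * real k + 1) * hermite_sqnorm k"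
proof -
  let ?g = "\<lambda>j x. (hermite_poly j x)\<^sup>2 * exp (- x\<^sup>2)"
  have "x\<^sup>2 * (hermite_poly k x)\<^sup>2 * exp (- x\<^sup>2) \<le> ?g (Suc k) x / 2 + 2 * (real k)\<^sup>2 * ?g (k - 1) x" for x
  proof -
    have "4 * (x\<^sup>2 * (hermite_poly k x)\<^sup>2) = (hermite_poly (Suc k) x + 2 * real k * hermite_poly (k - 1) x)\<^sup>2"
      by (simp add: hermite_poly_Suc power2_eq_square algebra_simps)
    also have "\<dots> \<le> 2 * ((hermite_poly (Suc k) x)\<^sup>2 + 4 * (real k)\<^sup>2 * (hermite_poly (k - 1) x)\<^sup>2)"
      using sum_squares_bound[of "hermite_poly (Suc k) x" "2 * real k * hermite_poly (k - 1) x"]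
      by (simp add: power2_eq_square algebra_simps)
    finally have "x\<^sup>2 * (hermite_poly k x)\<^sup>2
        \<le> (hermite_poly (Suc k) x)\<^sup>2 / 2 + 2 * (real k)\<^sup>2 * (hermite_poly (k - 1) x)\<^sup>2"
      by simp
    then have "x\<^sup>2 * (hermite_poly k x)\<^sup>2 * exp (- x\<^sup>2)
        \<le> ((hermite_poly (Suc k) x)\<^sup>2 / 2 + 2 * (real k)\<^sup>2 * (hermite_poly (k - 1) x)\<^sup>2) * exp (- x\<^sup>2)"
      by (rule mult_right_mono) simp
    then show ?thesis by (simp add: algebra_simps)
  qed
  moreover have "integrable lborel (\<lambda>x. x\<^sup>2 * (hermite_poly k x)\<^sup>2 * exp (- x\<^sup>2))"
    using integrable_poly_growth_gaussian[of "\<lambda>x. x\<^sup>2 * (hermite_poly k x)\<^sup>2"]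
    by (simp add: continuous_poly_growth_intros)
  ultimately have "(LINT x|lborel. x\<^sup>2 * (hermite_poly k x)\<^sup>2 * exp (- x\<^sup>2))
      \<le> (LINT x|lborel. ?g (Suc k) x / 2 + 2 * (real k)\<^sup>2 * ?g (k - 1) x)"
    using integrable_hermite_poly_sq_gaussian by (intro integral_mono) auto
  also have "\<dots> = hermite_sqnorm (Suc k) / 2 + 2 * (real k)\<^sup>2 * hermite_sqnorm (k - 1)"
    using integrable_hermite_poly_sq_gaussian unfolding hermite_sqnorm_def by simp
  also have "\<dots> = (2 * real k + 1) * hermite_sqnorm k"
    by (cases k) (simp_all add: hermite_sqnorm_Suc power2_eq_square algebra_simps)
  finally show ?thesis .
qed

section \<open>A pointwise bound in the oscillatory region\<close>

text \<open>For \<open>y = H\<^sub>k(x) exp(-x\<^sup>2/2)\<close> one has \<open>y' = (2k H\<^sub>k\<^sub>-\<^sub>1(x) - x H\<^sub>k(x)) exp(-x\<^sup>2/2)\<close> and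
  \<open>y'' + (2k + 1 - x\<^sup>2) y = 0\<close>; the energy below is \<open>y'\<^sup>2 + (2k + 1 - x\<^sup>2) y\<^sup>2\<close>, whose derivative is
  \<open>-2x y\<^sup>2\<close>.\<close>
definition hermite_energy :: "nat \<Rightarrow> real \<Rightarrow> real" where
  "hermite_energy k x = ((2 * real k * hermite_poly (k - 1) x - x * hermite_poly k x)\<^sup>2
     + (2 * real k + 1 - x\<^sup>2) * (hermite_poly k x)\<^sup>2) * exp (- x\<^sup>2)"

lemma hermite_energy_has_real_derivative:
  "(hermite_energy k has_real_derivative - 2 * x * (hermite_poly k x)\<^sup>2 * exp (- x\<^sup>2)) (at x)"
proof -
  define a where "a = hermite_poly k x"
  define b where "b = hermite_poly (k - 1) x"
  define c where "c = hermite_poly (k - 1 - 1) x"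
  define e where "e = exp (- x\<^sup>2)"
  define q where "q = 2 * real k * b - x * a"
  have deriv: "(hermite_energy k has_real_derivative
      (2 * q * (2 * real k * (2 * real (k - 1) * c) - a - x * (2 * real k * b))
        + (- 2 * x) * a\<^sup>2 + (2 * real k + 1 - x\<^sup>2) * (2 * a * (2 * real k * b))) * e
      + (q\<^sup>2 + (2 * real k + 1 - x\<^sup>2) * a\<^sup>2) * (- 2 * x * e)) (at x)"
    unfolding hermite_energy_def[abs_def] a_def b_def c_def e_def q_def
    by (auto intro!: derivative_eq_intros simp: algebra_simps power2_eq_square)
  have eq: "(2 * q * (2 * real k * (2 * real (k - 1) * c) - a - x * (2 * real k * b))
        + (- 2 * x) * a\<^sup>2 + (2 * real k + 1 - x\<^sup>2) * (2 * a * (2 * real k * b))) * e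
      + (q\<^sup>2 + (2 * real k + 1 - x\<^sup>2) * a\<^sup>2) * (- 2 * x * e)
      = - 2 * x * a\<^sup>2 * e + 4 * q * e * (real k * (a - 2 * x * b + 2 * real (k - 1) * c))"
    unfolding q_def by (simp add: algebra_simps power2_eq_square)
  have rec: "real k * (a - 2 * x * b + 2 * real (k - 1) * c) = 0"
    using hermite_poly_rec_pred[of k x] unfolding a_def b_def c_def by (simp add: numeral_2_eq_2)
  from deriv have "(hermite_energy k has_real_derivative - 2 * x * a\<^sup>2 * e) (at x)"
    by (simp only: eq rec) simp
  then show ?thesis
    by (simp add: a_def e_def)
qed

lemma hermite_energy_le_0: "hermite_energy k x \<le> hermite_energy k 0"
proof (cases "x \<le> 0")
  case True
  show ?thesis
  proof (rule DERIV_nonneg_imp_nondecreasing[OF True])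
    fix t assume "x \<le> t" "t \<le> 0"
    then show "\<exists>y. DERIV (hermite_energy k) t :> y \<and> 0 \<le> y"
      by (intro exI[of _ "- 2 * t * (hermite_poly k t)\<^sup>2 * exp (- t\<^sup>2)"] conjI
          hermite_energy_has_real_derivative) (auto intro!: mult_nonpos_nonneg)
  qed
next
  case False
  show ?thesis
  proof (rule DERIV_nonpos_imp_nonincreasing[of 0 x])
    show "0 \<le> x" using False by simp
    fix t assume "0 \<le> t" "t \<le> x"
    then show "\<exists>y. DERIV (hermite_energy k) t :> y \<and> y \<le> 0"
      by (intro exI[of _ "- 2 * t * (hermite_poly k t)\<^sup>2 * exp (- t\<^sup>2)"] conjI
          hermite_energy_has_real_derivative) auto
  qed
qed

lemma hermite_energy_0_le_integral:
  "hermite_energy k 0 \<le> (LINT x|lborel. 2 * \<bar>x\<bar> * (hermite_poly k x)\<^sup>2 * exp (- x\<^sup>2))"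
proof -
  let ?f = "\<lambda>x. 2 * x * (hermite_poly k x)\<^sup>2 * exp (- x\<^sup>2)"
  have growth: "continuous_poly_growth (\<lambda>x. 2 * x * (hermite_poly k x)\<^sup>2)"
    "continuous_poly_growth (\<lambda>x. 2 * \<bar>x\<bar> * (hermite_poly k x)\<^sup>2)"
    "continuous_poly_growth (\<lambda>x. (2 * real k * hermite_poly (k - 1) x - x * hermite_poly k x)\<^sup>2
       + (2 * real k + 1 - x\<^sup>2) * (hermite_poly k x)\<^sup>2)"
    by (intro continuous_poly_growth_intros)+
  have "((\<lambda>x. - hermite_energy k x) \<longlongrightarrow> 0) at_top"
    using tendsto_minus[OF tendsto_poly_growth_gaussian(1)[OF growth(3)]]
    unfolding hermite_energy_def by simp
  moreover have "((\<lambda>x. - hermite_energy k x) has_real_derivative ?f x) (at x)" for x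
    using DERIV_minus[OF hermite_energy_has_real_derivative[of k x]] by simp
  ultimately have half: "integrable lborel (\<lambda>x. indicator {0<..} x * ?f x)"
    "hermite_energy k 0 = (LINT x|lborel. indicator {0<..} x * ?f x)"
    using integral_Ioi_eq_if_antiderivative_vanishes[of "\<lambda>x. - hermite_energy k x" ?f]
      continuous_on_poly_growth_gaussian[OF growth(1)]
    by auto
  show ?thesis
    unfolding half(2)
  proof (rule integral_mono)
    show "integrable lborel (\<lambda>x. 2 * \<bar>x\<bar> * (hermite_poly k x)\<^sup>2 * exp (- x\<^sup>2))"
      by (rule integrable_poly_growth_gaussian[OF growth(2)])
    show "indicator {0<..} x * ?f x \<le> 2 * \<bar>x\<bar> * (hermite_poly k x)\<^sup>2 * exp (- x\<^sup>2)" for x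
      by (cases "0 < x") (auto simp: indicator_def intro!: mult_nonpos_nonneg)
  qed (rule half(1))
qed

lemma hermite_energy_0_le: "hermite_energy k 0 \<le> 2 * sqrt (2 * real k + 1) * hermite_sqnorm k"
proof -
  define s where "s = sqrt (2 * real k + 1)"
  have s: "0 < s" "s * s = 2 * real k + 1"
    unfolding s_def by simp_all
  let ?m2 = "LINT x|lborel. x\<^sup>2 * (hermite_poly k x)\<^sup>2 * exp (- x\<^sup>2)"
  have int_m2: "integrable lborel (\<lambda>x. x\<^sup>2 * (hermite_poly k x)\<^sup>2 * exp (- x\<^sup>2))"
    using integrable_poly_growth_gaussian[of "\<lambda>x. x\<^sup>2 * (hermite_poly k x)\<^sup>2"]
    by (simp add: continuous_poly_growth_intros)
  have "hermite_energy k 0 \<le> (LINT x|lborel. 2 * \<bar>x\<bar> * (hermite_poly k x)\<^sup>2 * exp (- x\<^sup>2))"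
    by (rule hermite_energy_0_le_integral)
  also have "\<dots> \<le> (LINT x|lborel. (1 / s) * (x\<^sup>2 * (hermite_poly k x)\<^sup>2 * exp (- x\<^sup>2))
      + s * ((hermite_poly k x)\<^sup>2 * exp (- x\<^sup>2)))"
  proof (rule integral_mono)
    show "integrable lborel (\<lambda>x. 2 * \<bar>x\<bar> * (hermite_poly k x)\<^sup>2 * exp (- x\<^sup>2))"
      using integrable_poly_growth_gaussian[of "\<lambda>x. 2 * \<bar>x\<bar> * (hermite_poly k x)\<^sup>2"]
      by (simp add: continuous_poly_growth_intros)
    fix x
    have "2 * \<bar>x\<bar> * s \<le> x\<^sup>2 + s * s"
      using sum_squares_bound[of "\<bar>x\<bar>" s] by (simp add: power2_eq_square)
    then have "2 * \<bar>x\<bar> \<le> x\<^sup>2 / s + s"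
      using s by (simp add: field_simps)
    from mult_right_mono[OF this, of "(hermite_poly k x)\<^sup>2 * exp (- x\<^sup>2)"]
    show "2 * \<bar>x\<bar> * (hermite_poly k x)\<^sup>2 * exp (- x\<^sup>2)
        \<le> (1 / s) * (x\<^sup>2 * (hermite_poly k x)\<^sup>2 * exp (- x\<^sup>2)) + s * ((hermite_poly k x)\<^sup>2 * exp (- x\<^sup>2))"
      by (simp add: algebra_simps)
  qed (use int_m2 integrable_hermite_poly_sq_gaussian in auto)
  also have "\<dots> = ?m2 / s + s * hermite_sqnorm k"
    using int_m2 integrable_hermite_poly_sq_gaussian unfolding hermite_sqnorm_def by simp
  also have "\<dots> \<le> (s * s) * hermite_sqnorm k / s + s * hermite_sqnorm k"
    using integral_sq_times_hermite_poly_sq_le[of k] s by (simp add: divide_right_mono)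
  also have "\<dots> = 2 * s * hermite_sqnorm k"
    using s(1) by simp
  finally show ?thesis
    unfolding s_def .
qed

lemma hermite_poly_sq_gaussian_le:
  assumes "x\<^sup>2 \<le> (2 * real k + 1) / 2"
  shows "(hermite_poly k x)\<^sup>2 * exp (- x\<^sup>2) \<le> 4 * hermite_sqnorm k / sqrt (2 * real k + 1)"
proof -
  define l where "l = 2 * real k + 1"
  have l: "1 \<le> l" "sqrt l * sqrt l = l"
    unfolding l_def by simp_all
  have "l / 2 * ((hermite_poly k x)\<^sup>2 * exp (- x\<^sup>2)) \<le> (l - x\<^sup>2) * ((hermite_poly k x)\<^sup>2 * exp (- x\<^sup>2))"
    using assms unfolding l_def by (intro mult_right_mono) auto
  also have "\<dots> \<le> hermite_energy k x"
    unfolding hermite_energy_def l_def by (simp add: algebra_simps)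
  also have "\<dots> \<le> hermite_energy k 0"
    by (rule hermite_energy_le_0)
  also have "\<dots> \<le> 2 * sqrt l * hermite_sqnorm k"
    unfolding l_def by (rule hermite_energy_0_le)
  finally have "(hermite_poly k x)\<^sup>2 * exp (- x\<^sup>2) \<le> 4 * sqrt l * hermite_sqnorm k / l"
    using l by (simp add: field_simps)
  also have "\<dots> = 4 * hermite_sqnorm k / sqrt l"
    using l by (simp add: field_simps)
  finally show ?thesis
    unfolding l_def .
qed

lemma hermite_fun_sq:
  "(hermite_fun n x)\<^sup>2 = (hermite_poly (n - 1) x)\<^sup>2 * exp (- x\<^sup>2) / hermite_sqnorm (n - 1)"
proof -
  have "(exp (- (x\<^sup>2) / 2))\<^sup>2 = exp (- x\<^sup>2)"
    by (simp add: power2_eq_square exp_add[symmetric])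
  moreover have "(sqrt (2 ^ (n - 1) * fact (n - 1) * sqrt pi))\<^sup>2 = hermite_sqnorm (n - 1)"
    by (simp add: hermite_sqnorm_eq)
  ultimately show ?thesis
    unfolding hermite_fun_def power_divide power_mult_distrib
    using hermite_sqnorm_pos[of "n - 1"] by simp
qed

lemma integrable_hermite_fun_sq: "integrable lborel (\<lambda>x. (hermite_fun n x)\<^sup>2)"
  unfolding hermite_fun_sq using integrable_hermite_poly_sq_gaussian by simp

lemma integral_hermite_fun_sq: "(LINT x|lborel. (hermite_fun n x)\<^sup>2) = 1"
  unfolding hermite_fun_sq using hermite_sqnorm_pos[of "n - 1"]
  by (simp add: hermite_sqnorm_def[symmetric])

lemma hermite_fun_sq_le:
  assumes "1 \<le> n" "x\<^sup>2 \<le> real n / 2"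
  shows "(hermite_fun n x)\<^sup>2 \<le> 4 / sqrt (real n)"
proof -
  have k: "2 * real (n - 1) + 1 = 2 * real n - 1"
    using assms(1) by (simp add: of_nat_diff)
  have "(hermite_poly (n - 1) x)\<^sup>2 * exp (- x\<^sup>2) \<le> 4 * hermite_sqnorm (n - 1) / sqrt (2 * real n - 1)"
    using hermite_poly_sq_gaussian_le[of x "n - 1"] assms k by simp
  then have "(hermite_fun n x)\<^sup>2 \<le> 4 / sqrt (2 * real n - 1)"
    unfolding hermite_fun_sq using hermite_sqnorm_pos[of "n - 1"] by (simp add: field_simps)
  also have "\<dots> \<le> 4 / sqrt (real n)"
    using assms(1) by (intro divide_left_mono) auto
  finally show ?thesis .
qed

section \<open>The logarithmic weight\<close>

lemma one_le_log_weight: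
  fixes x p :: real
  assumes "0 \<le> p"
  shows "1 \<le> (1 + ln (1 + x\<^sup>2)) powr p"
  using assms by (intro ge_one_powr_ge_zero) auto

lemma div_log_weight_le:
  fixes a x p :: real
  assumes "0 \<le> a" "0 \<le> p"
  shows "a / (1 + ln (1 + x\<^sup>2)) powr p \<le> a"
proof -
  have "a / (1 + ln (1 + x\<^sup>2)) powr p \<le> a / 1"
    using assms one_le_log_weight[OF assms(2), of x] by (intro divide_left_mono) auto
  then show ?thesis by simp
qed

lemma integrable_div_log_weight:
  fixes g :: "real \<Rightarrow> real" and p :: real
  assumes "integrable lborel g" "\<And>x. 0 \<le> g x" "0 \<le> p"
  shows "integrable lborel (\<lambda>x. g x / (1 + ln (1 + x\<^sup>2)) powr p)"
  using assms(1)
proof (rule Bochner_Integration.integrable_bound)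
  show "(\<lambda>x. g x / (1 + ln (1 + x\<^sup>2)) powr p) \<in> borel_measurable lborel"
  proof -
    have "g \<in> borel_measurable borel"
      using borel_measurable_integrable[OF assms(1)] by simp
    then show ?thesis by measurable
  qed
  show "AE x in lborel. norm (g x / (1 + ln (1 + x\<^sup>2)) powr p) \<le> norm (g x)"
    using assms(2,3) div_log_weight_le by auto
qed

lemma integral_div_log_weight_le:
  fixes g :: "real \<Rightarrow> real" and p :: real
  assumes "integrable lborel g" "\<And>x. 0 \<le> g x" "0 \<le> p"
  shows "(LINT x|lborel. g x / (1 + ln (1 + x\<^sup>2)) powr p) \<le> (LINT x|lborel. g x)"
  using assms div_log_weight_le by (intro integral_mono integrable_div_log_weight) auto

lemma integral_div_log_weight_split_le:
  fixes g :: "real \<Rightarrow> real" and p r c :: real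
  assumes "integrable lborel g" "\<And>x. 0 \<le> g x" "0 \<le> p" "0 < r" "\<And>x. x\<^sup>2 \<le> r \<Longrightarrow> g x \<le> c"
  shows "(LINT x|lborel. g x / (1 + ln (1 + x\<^sup>2)) powr p)
    \<le> 2 * sqrt r * c + (LINT x|lborel. g x) / (1 + ln (1 + r)) powr p"
proof -
  define W where "W = (1 + ln (1 + r)) powr p"
  have W: "1 \<le> W"
    unfolding W_def using assms(3,4) by (intro ge_one_powr_ge_zero) auto
  have c: "0 \<le> c"
    using assms(2)[of 0] assms(5)[of 0] assms(4) by simp
  have "g x / (1 + ln (1 + x\<^sup>2)) powr p \<le> c * indicator {-sqrt r..sqrt r} x + g x / W" for x
  proof (cases "x\<^sup>2 \<le> r")
    case True
    then have "x \<in> {-sqrt r..sqrt r}"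
      using real_sqrt_le_mono[OF True] by (auto simp: abs_le_iff)
    moreover have "g x / (1 + ln (1 + x\<^sup>2)) powr p \<le> g x"
      using assms(2,3) by (rule div_log_weight_le)
    moreover have "0 \<le> g x / W"
      using assms(2)[of x] W by simp
    ultimately show ?thesis
      using assms(5)[of x] True by simp
  next
    case False
    then have "W \<le> (1 + ln (1 + x\<^sup>2)) powr p"
      unfolding W_def using assms(3,4) by (intro powr_mono2) auto
    then have "g x / (1 + ln (1 + x\<^sup>2)) powr p \<le> g x / W"
      using W assms(2) by (intro divide_left_mono mult_pos_pos) auto
    moreover have "0 \<le> c * indicator {-sqrt r..sqrt r} x"
      using c by simp
    ultimately show ?thesis
      by linarith
  qed
  moreover have indicator: "integrable lborel (indicator {-sqrt r..sqrt r} :: real \<Rightarrow> real)"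
    by (rule integrable_real_indicator) (auto simp: emeasure_lborel_Icc_eq)
  ultimately have "(LINT x|lborel. g x / (1 + ln (1 + x\<^sup>2)) powr p)
      \<le> (LINT x|lborel. c * indicator {-sqrt r..sqrt r} x + g x / W)"
    using assms(1) integrable_div_log_weight[OF assms(1-3)] by (intro integral_mono) auto
  also have "\<dots> = 2 * sqrt r * c + (LINT x|lborel. g x) / W"
    using assms(1,4) indicator by simp
  finally show ?thesis
    unfolding W_def .
qed

lemma one_plus_ln_powr_le:
  fixes t p e :: real
  assumes "1 \<le> t" "0 < p" "0 < e"
  shows "(1 + ln t) powr p \<le> (1 + p / e) powr p * t powr e"
proof -
  define y where "y = t powr (e / p)"
  have y: "1 \<le> y"
    unfolding y_def using assms by (intro ge_one_powr_ge_zero) auto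
  have "ln t = p / e * ln y"
    unfolding y_def using assms by (simp add: ln_powr)
  also have "\<dots> \<le> p / e * (y - 1)"
    using assms y by (intro mult_left_mono ln_le_minus_one) auto
  finally have "ln t \<le> p / e * y - p / e"
    by (simp add: right_diff_distrib)
  moreover have "0 < p / e"
    using assms by simp
  ultimately have "1 + ln t \<le> (1 + p / e) * y"
    using y by (simp only: distrib_right mult_1_left; linarith)
  then have "(1 + ln t) powr p \<le> ((1 + p / e) * y) powr p"
    using assms by (intro powr_mono2) auto
  also have "\<dots> = (1 + p / e) powr p * t powr e"
    unfolding y_def using assms by (simp add: powr_mult powr_powr)
  finally show ?thesis .
qed

lemma one_plus_ln_le_twice:
  fixes t :: real
  assumes "0 < t"
  shows "1 + ln t \<le> 2 * (1 + ln (1 + sqrt (t / 2)))"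
proof -
  have "ln (sqrt (t / 2)) \<le> ln (1 + sqrt (t / 2))"
    using assms by (intro ln_mono) auto
  moreover have "ln (sqrt (t / 2)) = (ln t - ln 2) / 2"
    using assms by (simp add: ln_sqrt ln_div)
  ultimately show ?thesis
    using ln_2_less_1 by argo
qed

lemma integral_hermite_fun_sq_div_log_weight_le_ge_2:
  fixes p :: real
  assumes "0 < p" "2 \<le> n"
  shows "(LINT x|lborel. (hermite_fun n x)\<^sup>2 / (1 + ln (1 + x\<^sup>2)) powr p)
    \<le> (8 * (1 + 4 * p) powr p + 2 powr p) / (1 + ln (real n)) powr p"
proof -
  define r where "r = sqrt (real n / 2)"
  define q where "q = real n powr (1/4)"
  define L where "L = 1 + ln (real n)"
  have n: "2 \<le> real n"
    using assms(2) by simp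
  have "real n / 2 \<le> (real n / 2)\<^sup>2"
    using n mult_left_mono[of 1 "real n / 2" "real n / 2"] by (simp add: power2_eq_square)
  then have r: "0 < r" "r \<le> real n / 2"
    unfolding r_def using n real_le_lsqrt[of "real n / 2" "real n / 2"] by simp_all
  have q: "0 < q" "sqrt (real n) = q * q" "sqrt r \<le> q"
    unfolding q_def r_def using n
    by (auto simp: powr_half_sqrt[symmetric] powr_add[symmetric] powr_powr intro!: powr_mono2)
  have L: "1 \<le> L"
    unfolding L_def using n by simp
  have small: "(hermite_fun n x)\<^sup>2 \<le> 4 / sqrt (real n)" if "x\<^sup>2 \<le> r" for x
    using hermite_fun_sq_le[of n x] assms(2) that r(2) by simp
  have "(LINT x|lborel. (hermite_fun n x)\<^sup>2 / (1 + ln (1 + x\<^sup>2)) powr p)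
      \<le> 2 * sqrt r * (4 / sqrt (real n)) + 1 / (1 + ln (1 + r)) powr p"
    using integral_div_log_weight_split_le[OF integrable_hermite_fun_sq _ _ r(1) small] assms(1)
    by (simp add: integral_hermite_fun_sq)
  also have "2 * sqrt r * (4 / sqrt (real n)) \<le> 8 * (1 + 4 * p) powr p / L powr p"
  proof -
    have "2 * sqrt r * (4 / sqrt (real n)) \<le> 8 / q"
      using q mult_right_mono[OF q(3), of q] by (simp add: field_simps)
    moreover have "L powr p \<le> (1 + 4 * p) powr p * q"
      unfolding L_def q_def using one_plus_ln_powr_le[of "real n" p "1/4"] n assms(1)
      by (simp add: mult.commute)
    then have "8 / q \<le> 8 * (1 + 4 * p) powr p / L powr p"
      using q(1) L by (simp add: field_simps)
    ultimately show ?thesis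
      by linarith
  qed
  also have "1 / (1 + ln (1 + r)) powr p \<le> 2 powr p / L powr p"
  proof -
    have "(L / 2) powr p \<le> (1 + ln (1 + r)) powr p"
      unfolding L_def r_def using one_plus_ln_le_twice[of "real n"] n assms(1)
      by (intro powr_mono2) auto
    moreover have "0 < 1 + ln (1 + r)"
      using r ln_ge_zero[of "1 + r"] by linarith
    ultimately show ?thesis
      using L by (simp add: powr_divide field_simps)
  qed
  finally show ?thesis
    unfolding L_def by (simp add: add_divide_distrib)
qed

lemma integral_hermite_fun_sq_div_log_weight_le:
  fixes p :: real
  assumes "0 < p" "1 \<le> n"
  shows "(LINT x|lborel. (hermite_fun n x)\<^sup>2 / (1 + ln (1 + x\<^sup>2)) powr p)
    \<le> (8 * (1 + 4 * p) powr p + 2 powr p) / (1 + ln (real n)) powr p"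
proof (cases "n = 1")
  case True
  have "(LINT x|lborel. (hermite_fun n x)\<^sup>2 / (1 + ln (1 + x\<^sup>2)) powr p) \<le> 1"
    using integral_div_log_weight_le[OF integrable_hermite_fun_sq, of n p] assms(1)
    by (simp add: integral_hermite_fun_sq)
  also have "1 \<le> (2::real) powr p"
    using assms(1) by (intro ge_one_powr_ge_zero) auto
  also have "\<dots> \<le> 8 * (1 + 4 * p) powr p + 2 powr p"
    by simp
  finally show ?thesis
    using True by simp
next
  case False
  with assms show ?thesis
    by (intro integral_hermite_fun_sq_div_log_weight_le_ge_2) auto
qed

theorem lemma1p4:
  fixes \<delta>\<^sub>1 :: real
  assumes "\<delta>\<^sub>1 > 0"
  shows "\<exists>C. \<forall>n::nat. n \<ge> 1 \<longrightarrow>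
           sqrt (LINT x|lborel. (hermite_fun n x)\<^sup>2 / (1 + ln (1 + x\<^sup>2)) powr (2 * \<delta>\<^sub>1))
             \<le> C / (1 + ln (real n)) powr \<delta>\<^sub>1"
proof -
  define A where "A = 8 * (1 + 4 * (2 * \<delta>\<^sub>1)) powr (2 * \<delta>\<^sub>1) + 2 powr (2 * \<delta>\<^sub>1)"
  have "sqrt (LINT x|lborel. (hermite_fun n x)\<^sup>2 / (1 + ln (1 + x\<^sup>2)) powr (2 * \<delta>\<^sub>1))
      \<le> sqrt A / (1 + ln (real n)) powr \<delta>\<^sub>1" if "1 \<le> n" for n
  proof -
    have "(1 + ln (real n)) powr (2 * \<delta>\<^sub>1) = ((1 + ln (real n)) powr \<delta>\<^sub>1)\<^sup>2"
      using that by (simp add: power2_eq_square powr_add[symmetric])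
    then have "sqrt (LINT x|lborel. (hermite_fun n x)\<^sup>2 / (1 + ln (1 + x\<^sup>2)) powr (2 * \<delta>\<^sub>1))
        \<le> sqrt (A / ((1 + ln (real n)) powr \<delta>\<^sub>1)\<^sup>2)"
      using integral_hermite_fun_sq_div_log_weight_le[of "2 * \<delta>\<^sub>1" n] assms that
      unfolding A_def by simp
    also have "\<dots> = sqrt A / (1 + ln (real n)) powr \<delta>\<^sub>1"
      by (simp add: real_sqrt_divide)
    finally show ?thesis .
  qed
  then show ?thesis
    by blast
qed

end
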